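(* Let $G$ be a finite connected simple graph with $n$ vertices and $m$ edges, and let $a,b\in\mathbb{C}$, $c=a-b$. Let $\mathbf d:\ell^2(R(G))\to\ell^2(V(G))$ be a linear map with $\mathbf d\mathbf d^*=\mathbf I_n$, put $\mathbf C=a\,\mathbf d^*\mathbf d+b(\mathbf I_{2m}-\mathbf d^*\mathbf d)$ and $\mathbf U=\mathbf S\mathbf C$. Then for every $u\in\mathbb{C}$ with $b^2u^2\neq 1$, \[ \det(\mathbf I_{2m}-u\mathbf U)=(1-b^2u^2)^{m-n}\det\big((1-abu^2)\mathbf I_n-cu\,\mathbf d\mathbf S\mathbf d^*\big). \] Equivalently, the zeta function $\zeta(G,u)=\det(\mathbf I_{2m}-u\mathbf U)^{-1}$ satisfies $\zeta(G,u)^{-1}=(1-b^2u^2)^{m-n}\det((1-abu^2)\mathbf I_n-cu\,\mathbf d\mathbf S\mathbf d^* )$.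
   Context: For a simple graph $G$, $R(G)=\{(u,v),(v,u): uv\in E(G)\}$ is the set of arcs (so $|R(G)|=2m$); for $e=(u,v)$, $e^{-1}=(v,u)$. $\ell^2(V(G))\cong\mathbb{C}^n$ and $\ell^2(R(G))\cong\mathbb{C}^{2m}$ are the spaces of complex functions on vertices and arcs with the standard inner product; $\mathbf d^*$ denotes the adjoint of $\mathbf d$. $\mathbf S$ is the arc-reversal operator on $\ell^2(R(G))$: $(\mathbf S\omega)(e)=\omega(e^{-1})$. $\mathbf I_k$ is the identity of size $k$. The matrix $\mathbf U=\mathbf S\mathbf C$ is the time evolution matrix of a "general coined quantum walk" on $G$. *)

theory Defs
  imports Complex_Main "Jordan_Normal_Form.Schur_Decomposition"
begin

definition simple_graph :: "'a set \<Rightarrow> ('a \<Rightarrow> 'a \<Rightarrow> bool) \<Rightarrow> bool" where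
  "simple_graph V E \<longleftrightarrow> finite V \<and> (\<forall>x y. E x y \<longrightarrow> x \<in> V \<and> y \<in> V)
     \<and> (\<forall>x y. E x y \<longrightarrow> E y x) \<and> (\<forall>x. \<not> E x x)"

definition connected_graph :: "'a set \<Rightarrow> ('a \<Rightarrow> 'a \<Rightarrow> bool) \<Rightarrow> bool" where
  "connected_graph V E \<longleftrightarrow> (\<forall>x\<in>V. \<forall>y\<in>V. E\<^sup>*\<^sup>* x y)"

definition arcs :: "('a \<Rightarrow> 'a \<Rightarrow> bool) \<Rightarrow> ('a \<times> 'a) set" where
  "arcs E = {(x, y). E x y}"

definition edges :: "('a \<Rightarrow> 'a \<Rightarrow> bool) \<Rightarrow> 'a set set" where
  "edges E = {{x, y} | x y. E x y}"

definition arc_rev :: "'a \<times> 'a \<Rightarrow> 'a \<times> 'a" where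
  "arc_rev e = (snd e, fst e)"

text \<open>The arc-reversal operator S on l^2(R(G)), as a 2m x 2m matrix with respect to the
  standard basis indexed by the enumeration as of the arcs: (S w)(e) = w(e^{-1}).\<close>
definition reversal_mat :: "('a \<times> 'a) list \<Rightarrow> complex mat" where
  "reversal_mat as = mat (length as) (length as)
     (\<lambda>(i, j). if as ! j = arc_rev (as ! i) then 1 else 0)"

end

theory Submission
  imports Defs
begin

text \<open>Write \<open>P = d\<^sup>* d\<close>, so that \<open>C = b I + c P\<close> and \<open>I - uU = (I - ubS) - uc SP\<close>.
  The arc reversal \<open>S\<close> is the permutation matrix of a fixed-point-free involution of the
  \<open>2m\<close> arcs, hence \<open>(I + ubS)(I - ubS) = (1 - b\<^sup>2u\<^sup>2) I\<close> and \<open>det (I + ubS) = (1 - b\<^sup>2u\<^sup>2)\<^sup>m\<close>.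
  Multiplying by \<open>I + ubS\<close> turns \<open>I - uU\<close> into \<open>(1 - b\<^sup>2u\<^sup>2) I - uc (S + ub) d\<^sup>* d\<close>, and
  Sylvester's identity \<open>det (I - XY) = det (I - YX)\<close> moves the determinant to the \<open>n \<times> n\<close>
  matrix \<open>d (S + ub) d\<^sup>* = dSd\<^sup>* + ub I\<close>, using \<open>dd\<^sup>* = I\<close>.\<close>

declare minus_carrier_mat [simp]

definition perm_mat :: "nat \<Rightarrow> (nat \<Rightarrow> nat) \<Rightarrow> 'a :: {zero, one} mat" where
  "perm_mat N \<sigma> = mat N N (\<lambda>(i, j). if j = \<sigma> i then 1 else 0)"

lemma perm_mat_carrier [simp]: "perm_mat N \<sigma> \<in> carrier_mat N N"
  and perm_mat_dim [simp]: "dim_row (perm_mat N \<sigma>) = N" "dim_col (perm_mat N \<sigma>) = N"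
  by (simp_all add: perm_mat_def)

lemma perm_mat_mult_perm_mat:
  assumes "\<And>i. i < N \<Longrightarrow> \<sigma> i < N"
  shows "perm_mat N \<sigma> * perm_mat N \<tau> = (perm_mat N (\<tau> \<circ> \<sigma>) :: 'a :: semiring_1 mat)"
  using assms by (intro eq_matI)
    (auto simp: perm_mat_def scalar_prod_def sum.delta' if_distrib[of "\<lambda>x. x * _"] cong: if_cong)

lemma perm_mat_involution_squared:
  assumes "\<And>i. i < N \<Longrightarrow> \<sigma> i < N" and "\<And>i. i < N \<Longrightarrow> \<sigma> (\<sigma> i) = i"
  shows "perm_mat N \<sigma> * perm_mat N \<sigma> = (1\<^sub>m N :: 'a :: semiring_1 mat)"
proof -
  have "perm_mat N \<sigma> * perm_mat N \<sigma> = (perm_mat N (\<sigma> \<circ> \<sigma>) :: 'a mat)"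
    by (rule perm_mat_mult_perm_mat[OF assms(1)])
  also have "\<dots> = 1\<^sub>m N"
    by (rule eq_matI) (auto simp: perm_mat_def assms(2))
  finally show ?thesis .
qed

lemma mat_diag_perm_mat_mat_diag:
  assumes "\<And>i. i < N \<Longrightarrow> \<sigma> i < N" and "\<And>i. i < N \<Longrightarrow> s i \<in> {1, -1}"
    and "\<And>i. i < N \<Longrightarrow> s (\<sigma> i) = - s i"
  shows "mat_diag N s * perm_mat N \<sigma> * mat_diag N s = - (perm_mat N \<sigma> :: 'a :: comm_ring_1 mat)"
proof -
  have "s i * s i = 1" if "i < N" for i
    using assms(2)[OF that] by auto
  moreover have "mat_diag N s * perm_mat N \<sigma> * mat_diag N s
      = mat N N (\<lambda>(i, j). s i * perm_mat N \<sigma> $$ (i, j) * s j :: 'a)"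
    by (simp add: mat_diag_mult_left[of _ N N] mat_diag_mult_right[of _ N N]) (intro eq_matI, auto)
  ultimately show ?thesis
    using assms by (intro eq_matI) (auto simp: perm_mat_def)
qed

lemma det_one_minus_smult_anti_similar:
  fixes A D :: "'a :: comm_ring_1 mat"
  assumes A: "A \<in> carrier_mat n n" and D: "D \<in> carrier_mat n n"
    and D_square: "D * D = 1\<^sub>m n" and anti_similar: "D * A * D = - A"
  shows "det (1\<^sub>m n - t \<cdot>\<^sub>m A) = det (1\<^sub>m n - (- t) \<cdot>\<^sub>m A)"
proof -
  have tA: "t \<cdot>\<^sub>m A \<in> carrier_mat n n" and DA: "D * A \<in> carrier_mat n n"
    and X: "1\<^sub>m n - t \<cdot>\<^sub>m A \<in> carrier_mat n n"
    using A D by simp_all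
  have "D * (1\<^sub>m n - t \<cdot>\<^sub>m A) * D = (D - t \<cdot>\<^sub>m (D * A)) * D"
    using mult_minus_distrib_mat[OF D one_carrier_mat tA] mult_smult_distrib[OF D A] D by simp
  also have "\<dots> = D * D - t \<cdot>\<^sub>m (D * A * D)"
    using minus_mult_distrib_mat[OF D _ D, of "t \<cdot>\<^sub>m (D * A)"] mult_smult_assoc_mat[OF DA D] DA
    by simp
  also have "\<dots> = 1\<^sub>m n - (- t) \<cdot>\<^sub>m A"
    unfolding D_square anti_similar using A by (intro eq_matI) auto
  finally have "det (D * (1\<^sub>m n - t \<cdot>\<^sub>m A) * D) = det (1\<^sub>m n - (- t) \<cdot>\<^sub>m A)"
    by simp
  moreover have "det D * det D = 1"
    using det_mult[OF D D] D_square by simp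
  moreover have "det (D * (1\<^sub>m n - t \<cdot>\<^sub>m A) * D) = det D * det D * det (1\<^sub>m n - t \<cdot>\<^sub>m A)"
    using det_mult[OF mult_carrier_mat[OF D X] D] det_mult[OF D X] by simp
  ultimately show ?thesis
    by simp
qed

lemma one_minus_smult_involution_mult:
  fixes S :: "'a :: comm_ring_1 mat"
  assumes S: "S \<in> carrier_mat N N" and involution: "S * S = 1\<^sub>m N"
  shows "(1\<^sub>m N - (- t) \<cdot>\<^sub>m S) * (1\<^sub>m N - t \<cdot>\<^sub>m S) = (1 - t\<^sup>2) \<cdot>\<^sub>m 1\<^sub>m N"
proof -
  have tS: "c \<cdot>\<^sub>m S \<in> carrier_mat N N" for c
    using S by simp
  have X: "1\<^sub>m N - t \<cdot>\<^sub>m S \<in> carrier_mat N N"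
    using S by simp
  have "(1\<^sub>m N - (- t) \<cdot>\<^sub>m S) * (1\<^sub>m N - t \<cdot>\<^sub>m S)
      = (1\<^sub>m N - t \<cdot>\<^sub>m S) - ((- t) \<cdot>\<^sub>m S - (- t) \<cdot>\<^sub>m (t \<cdot>\<^sub>m (S * S)))"
    using minus_mult_distrib_mat[OF one_carrier_mat tS X]
      mult_minus_distrib_mat[OF tS one_carrier_mat tS] mult_smult_assoc_mat[OF S tS]
      mult_smult_distrib[OF S S] S
    by simp
  also have "\<dots> = (1 - t\<^sup>2) \<cdot>\<^sub>m 1\<^sub>m N"
    unfolding involution using S by (intro eq_matI) (auto simp: power2_eq_square)
  finally show ?thesis .
qed

definition reversed_char_poly :: "'a :: comm_ring_1 mat \<Rightarrow> 'a poly" where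
  "reversed_char_poly A =
     det (mat (dim_row A) (dim_row A) (\<lambda>(i, j). [:if i = j then 1 else 0, - A $$ (i, j):]))"

lemma poly_reversed_char_poly:
  assumes "A \<in> carrier_mat n n"
  shows "poly (reversed_char_poly A) t = det (1\<^sub>m n - t \<cdot>\<^sub>m A)"
  unfolding reversed_char_poly_def using assms by (intro poly_det_cong[of _ n]) auto

lemma det_one_minus_smult_involution:
  fixes S :: "'a :: {idom, ring_char_0} mat"
  assumes S: "S \<in> carrier_mat (2 * m) (2 * m)" and involution: "S * S = 1\<^sub>m (2 * m)"
    and even: "\<And>t. det (1\<^sub>m (2 * m) - t \<cdot>\<^sub>m S) = det (1\<^sub>m (2 * m) - (- t) \<cdot>\<^sub>m S)"
  shows "det (1\<^sub>m (2 * m) - t \<cdot>\<^sub>m S) = (1 - t\<^sup>2) ^ m"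
proof -
  txt \<open>\<open>F(t)\<^sup>2 = F(t) F(-t) = (1 - t\<^sup>2)\<^sup>2\<^sup>m\<close> as polynomials, and \<open>F(0) = 1\<close> fixes the sign.\<close>
  define F where "F = reversed_char_poly S"
  define G :: "'a poly" where "G = [:1, 0, -1:] ^ m"
  have poly_F: "poly F t = det (1\<^sub>m (2 * m) - t \<cdot>\<^sub>m S)" for t
    unfolding F_def by (rule poly_reversed_char_poly[OF S])
  have poly_G: "poly G t = (1 - t\<^sup>2) ^ m" for t
    by (simp add: G_def poly_power power2_eq_square)
  have "poly (F\<^sup>2) t = poly (G\<^sup>2) t" for t
  proof -
    have "poly (F\<^sup>2) t = det ((1\<^sub>m (2 * m) - (- t) \<cdot>\<^sub>m S) * (1\<^sub>m (2 * m) - t \<cdot>\<^sub>m S))"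
      using S by (simp add: power2_eq_square poly_F even[of t] det_mult[of _ "2 * m"])
    also have "\<dots> = (1 - t\<^sup>2) ^ (2 * m)"
      by (simp add: one_minus_smult_involution_mult[OF S involution])
    also have "\<dots> = poly (G\<^sup>2) t"
      by (simp add: poly_G mult.commute flip: power_mult)
    finally show ?thesis .
  qed
  then have "F\<^sup>2 = G\<^sup>2"
    by (intro poly_eq_poly_eq_iff[THEN iffD1] ext)
  moreover have "1\<^sub>m (2 * m) - 0 \<cdot>\<^sub>m S = 1\<^sub>m (2 * m)"
    using S by (intro eq_matI) auto
  then have "poly F 0 = 1" and "poly G 0 = 1"
    by (simp_all add: poly_F poly_G)
  ultimately have "F = G"
    by (auto simp: power2_eq_iff)
  then show ?thesis
    using poly_F poly_G by metis
qed

lemma det_one_minus_mult_comm: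
  fixes X Y :: "'a :: idom mat"
  assumes X: "X \<in> carrier_mat N n" and Y: "Y \<in> carrier_mat n N"
  shows "det (1\<^sub>m N - X * Y) = det (1\<^sub>m n - Y * X)"
proof -
  let ?M = "four_block_mat (1\<^sub>m N) X Y (1\<^sub>m n)"
  have "?M = four_block_mat (1\<^sub>m N) X (0\<^sub>m n N) (1\<^sub>m n)
      * four_block_mat (1\<^sub>m N - X * Y) (0\<^sub>m N n) Y (1\<^sub>m n)"
    using X Y by (subst mult_four_block_mat) (auto intro!: cong_four_block_mat)
  then have "det ?M = det (1\<^sub>m N - X * Y)"
    using X Y by (simp add: det_mult[of _ "N + n"] det_four_block_mat_lower_left_zero[OF _ X]
        det_four_block_mat_upper_right_zero[of _ N _ n])
  moreover have "?M = four_block_mat (1\<^sub>m N) (0\<^sub>m N n) Y (1\<^sub>m n)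
      * four_block_mat (1\<^sub>m N) X (0\<^sub>m n N) (1\<^sub>m n - Y * X)"
    using X Y by (subst mult_four_block_mat) (auto intro!: cong_four_block_mat)
  then have "det ?M = det (1\<^sub>m n - Y * X)"
    using X Y by (simp add: det_mult[of _ "N + n"] det_four_block_mat_lower_left_zero[OF _ X]
        det_four_block_mat_upper_right_zero[of _ N _ n])
  ultimately show ?thesis
    by simp
qed

lemma one_minus_smult_involution_mult_walk:
  fixes S P :: "'a :: comm_ring_1 mat"
  assumes S: "S \<in> carrier_mat N N" and involution: "S * S = 1\<^sub>m N" and P: "P \<in> carrier_mat N N"
  shows "(1\<^sub>m N - (- (u * b)) \<cdot>\<^sub>m S) * (1\<^sub>m N - u \<cdot>\<^sub>m (S * (b \<cdot>\<^sub>m 1\<^sub>m N + c \<cdot>\<^sub>m P)))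
    = (1 - (u * b)\<^sup>2) \<cdot>\<^sub>m 1\<^sub>m N - (u * c) \<cdot>\<^sub>m ((S + (u * b) \<cdot>\<^sub>m 1\<^sub>m N) * P)"
proof -
  let ?B = "1\<^sub>m N - (- (u * b)) \<cdot>\<^sub>m S"
  have B: "?B \<in> carrier_mat N N" and SP: "S * P \<in> carrier_mat N N"
    using S P by simp_all
  have "S * (b \<cdot>\<^sub>m 1\<^sub>m N + c \<cdot>\<^sub>m P) = b \<cdot>\<^sub>m S + c \<cdot>\<^sub>m (S * P)"
    using mult_add_distrib_mat[OF S, of "b \<cdot>\<^sub>m 1\<^sub>m N" N "c \<cdot>\<^sub>m P"] mult_smult_distrib[OF S P]
      mult_smult_distrib[OF S one_carrier_mat] S P by simp
  then have "1\<^sub>m N - u \<cdot>\<^sub>m (S * (b \<cdot>\<^sub>m 1\<^sub>m N + c \<cdot>\<^sub>m P))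
      = (1\<^sub>m N - (u * b) \<cdot>\<^sub>m S) - (u * c) \<cdot>\<^sub>m (S * P)"
    using S SP by (intro eq_matI) (auto simp: algebra_simps)
  moreover have "?B * (S * P) = (S + (u * b) \<cdot>\<^sub>m 1\<^sub>m N) * P"
  proof -
    have "?B * (S * P) = S * P + (u * b) \<cdot>\<^sub>m (S * S * P)"
      using minus_mult_distrib_mat[OF one_carrier_mat _ SP, of "(- (u * b)) \<cdot>\<^sub>m S"]
        mult_smult_assoc_mat[OF S SP] assoc_mult_mat[OF S S P] S SP
      by (intro eq_matI) auto
    also have "\<dots> = (S + (u * b) \<cdot>\<^sub>m 1\<^sub>m N) * P"
      unfolding involution
      using add_mult_distrib_mat[OF S _ P, of "(u * b) \<cdot>\<^sub>m 1\<^sub>m N"]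
        mult_smult_assoc_mat[OF one_carrier_mat P] P by simp
    finally show ?thesis .
  qed
  ultimately show ?thesis
    using mult_minus_distrib_mat[OF B _ smult_carrier_mat[OF SP], of "1\<^sub>m N - (u * b) \<cdot>\<^sub>m S"]
      one_minus_smult_involution_mult[OF S involution, of "u * b"] mult_smult_distrib[OF B SP] S
    by simp
qed

lemma det_smult_one_minus_mult_comm:
  fixes X Y :: "'a :: field mat"
  assumes X: "X \<in> carrier_mat N n" and Y: "Y \<in> carrier_mat n N" and k: "k \<noteq> 0"
  shows "k ^ n * det (k \<cdot>\<^sub>m 1\<^sub>m N - X * Y) = k ^ N * det (k \<cdot>\<^sub>m 1\<^sub>m n - Y * X)"
proof -
  have X': "(1 / k) \<cdot>\<^sub>m X \<in> carrier_mat N n"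
    using X by simp
  have "k \<cdot>\<^sub>m 1\<^sub>m N - X * Y = k \<cdot>\<^sub>m (1\<^sub>m N - (1 / k) \<cdot>\<^sub>m X * Y)"
    using X Y k by (intro eq_matI) (auto simp: mult_smult_assoc_mat[OF X Y] field_simps)
  moreover have "k \<cdot>\<^sub>m 1\<^sub>m n - Y * X = k \<cdot>\<^sub>m (1\<^sub>m n - Y * ((1 / k) \<cdot>\<^sub>m X))"
    using X Y k by (intro eq_matI) (auto simp: mult_smult_distrib[OF Y X] field_simps)
  ultimately show ?thesis
    using det_one_minus_mult_comm[OF X' Y] X Y by simp
qed

lemma det_one_minus_smult_perm_mat_involution:
  assumes "\<And>i. i < 2 * m \<Longrightarrow> \<sigma> i < 2 * m" and "\<And>i. i < 2 * m \<Longrightarrow> \<sigma> (\<sigma> i) = i"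
    and "\<And>i. i < 2 * m \<Longrightarrow> \<sigma> i \<noteq> i"
  shows "det (1\<^sub>m (2 * m) - t \<cdot>\<^sub>m perm_mat (2 * m) \<sigma>) = (1 - t\<^sup>2 :: 'a :: {idom, ring_char_0}) ^ m"
proof (rule det_one_minus_smult_involution[OF perm_mat_carrier
      perm_mat_involution_squared[OF assms(1,2)]])
  txt \<open>Conjugating by a sign flip that is \<open>1\<close> on one arc of each 2-cycle and \<open>-1\<close> on the other
    shows that \<open>t \<mapsto> det (I - tS)\<close> is even.\<close>
  define s :: "nat \<Rightarrow> 'a" where "s i = (if i < \<sigma> i then 1 else -1)" for i
  have "s (\<sigma> i) = - s i" if "i < 2 * m" for i
    using assms(2,3)[OF that] by (auto simp: s_def)
  then have anti_similar:
      "mat_diag (2 * m) s * perm_mat (2 * m) \<sigma> * mat_diag (2 * m) s = - perm_mat (2 * m) \<sigma>"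
    using assms(1) by (intro mat_diag_perm_mat_mat_diag) (auto simp: s_def)
  moreover have "s i * s i = 1" for i
    by (simp add: s_def)
  then have "mat_diag (2 * m) s * mat_diag (2 * m) s = 1\<^sub>m (2 * m)"
    by simp
  then show "det (1\<^sub>m (2 * m) - t \<cdot>\<^sub>m perm_mat (2 * m) \<sigma>) =
      det (1\<^sub>m (2 * m) - (- t) \<cdot>\<^sub>m perm_mat (2 * m) \<sigma>)" for t :: 'a
    by (rule det_one_minus_smult_anti_similar[OF perm_mat_carrier mat_diag_dim _ anti_similar])
qed

lemma det_one_minus_walk:
  fixes S d e :: "'a :: field mat"
  assumes S: "S \<in> carrier_mat N N" and involution: "S * S = 1\<^sub>m N"
    and d: "d \<in> carrier_mat n N" and e: "e \<in> carrier_mat N n" and right_inverse: "d * e = 1\<^sub>m n"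
    and nonsingular: "1 - b\<^sup>2 * u\<^sup>2 \<noteq> 0"
  shows "(1 - b\<^sup>2 * u\<^sup>2) ^ n * det (1\<^sub>m N - (- (u * b)) \<cdot>\<^sub>m S)
      * det (1\<^sub>m N - u \<cdot>\<^sub>m (S * (a \<cdot>\<^sub>m (e * d) + b \<cdot>\<^sub>m (1\<^sub>m N - e * d))))
    = (1 - b\<^sup>2 * u\<^sup>2) ^ N * det ((1 - a * b * u\<^sup>2) \<cdot>\<^sub>m 1\<^sub>m n - ((a - b) * u) \<cdot>\<^sub>m (d * S * e))"
proof -
  define k where "k = 1 - b\<^sup>2 * u\<^sup>2"
  define C where "C = a \<cdot>\<^sub>m (e * d) + b \<cdot>\<^sub>m (1\<^sub>m N - e * d)"
  define W where "W = (S + (u * b) \<cdot>\<^sub>m 1\<^sub>m N) * e"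
  define X where "X = (u * (a - b)) \<cdot>\<^sub>m W"
  have "S + (u * b) \<cdot>\<^sub>m 1\<^sub>m N \<in> carrier_mat N N"
    using S by simp
  then have W: "W \<in> carrier_mat N n"
    unfolding W_def using e by (rule mult_carrier_mat)
  then have P: "e * d \<in> carrier_mat N N" and X: "X \<in> carrier_mat N n"
    using d e by (simp_all add: X_def)
  then have C: "C \<in> carrier_mat N N"
    by (simp add: C_def add_carrier_mat)
  have "C = b \<cdot>\<^sub>m 1\<^sub>m N + (a - b) \<cdot>\<^sub>m (e * d)"
    unfolding C_def using d e by (intro eq_matI) (auto simp: algebra_simps)
  moreover have "(S + (u * b) \<cdot>\<^sub>m 1\<^sub>m N) * (e * d) = W * d"
    using S d e by (simp add: W_def assoc_mult_mat[of _ N N e n d N])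
  ultimately have "(1\<^sub>m N - (- (u * b)) \<cdot>\<^sub>m S) * (1\<^sub>m N - u \<cdot>\<^sub>m (S * C)) = k \<cdot>\<^sub>m 1\<^sub>m N - X * d"
    using one_minus_smult_involution_mult_walk[OF S involution P, of u b "a - b"]
      mult_smult_assoc_mat[OF W d] by (simp add: X_def k_def power_mult_distrib mult.commute)
  moreover have "det ((1\<^sub>m N - (- (u * b)) \<cdot>\<^sub>m S) * (1\<^sub>m N - u \<cdot>\<^sub>m (S * C)))
      = det (1\<^sub>m N - (- (u * b)) \<cdot>\<^sub>m S) * det (1\<^sub>m N - u \<cdot>\<^sub>m (S * C))"
    using S mult_carrier_mat[OF S C] by (intro det_mult[of _ N]) simp_all
  ultimately have "det (1\<^sub>m N - (- (u * b)) \<cdot>\<^sub>m S) * det (1\<^sub>m N - u \<cdot>\<^sub>m (S * C))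
      = det (k \<cdot>\<^sub>m 1\<^sub>m N - X * d)"
    by simp
  moreover have "d * W = d * S * e + (u * b) \<cdot>\<^sub>m 1\<^sub>m n"
  proof -
    have "W = S * e + (u * b) \<cdot>\<^sub>m e"
      unfolding W_def using add_mult_distrib_mat[OF S _ e, of "(u * b) \<cdot>\<^sub>m 1\<^sub>m N"]
        mult_smult_assoc_mat[OF one_carrier_mat e] e by simp
    then show ?thesis
      using mult_add_distrib_mat[OF d, of "S * e" n "(u * b) \<cdot>\<^sub>m e"] mult_smult_distrib[OF d e]
        assoc_mult_mat[OF d S e] right_inverse S e by simp
  qed
  then have "k \<cdot>\<^sub>m 1\<^sub>m n - d * X = (1 - a * b * u\<^sup>2) \<cdot>\<^sub>m 1\<^sub>m n - ((a - b) * u) \<cdot>\<^sub>m (d * S * e)"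
    using S d e W by (intro eq_matI)
      (auto simp: X_def k_def mult_smult_distrib[OF d W] algebra_simps power2_eq_square)
  ultimately show ?thesis
    using det_smult_one_minus_mult_comm[OF X d nonsingular[folded k_def]]
    by (simp add: C_def k_def mult.assoc)
qed

lemma card_arcs:
  assumes "simple_graph V E"
  shows "card (arcs E) = 2 * card (edges E)"
proof -
  have "arcs E \<subseteq> V \<times> V" and "finite V"
    using assms unfolding simple_graph_def arcs_def by auto
  then have finite_arcs: "finite (arcs E)"
    by (meson finite_SigmaI finite_subset)
  define arcs_of where "arcs_of e = {(x, y). E x y \<and> {x, y} = e}" for e
  have card_arcs_of: "card (arcs_of e) = 2" if e: "e \<in> edges E" for e
  proof -
    obtain x y where e: "e = {x, y}" and "E x y"
      using e unfolding edges_def by blast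
    with assms have "x \<noteq> y" and "arcs_of e = {(x, y), (y, x)}"
      unfolding arcs_of_def simple_graph_def by (auto simp: doubleton_eq_iff)
    then show ?thesis
      by simp
  qed
  have "finite (edges E)"
    using finite_arcs unfolding edges_def arcs_def
    by (auto intro: finite_surj[where f = "\<lambda>(x, y). {x, y}"])
  moreover have "arcs E = (\<Union>e\<in>edges E. arcs_of e)"
    unfolding arcs_of_def arcs_def edges_def by auto
  ultimately have "card (arcs E) = (\<Sum>e\<in>edges E. card (arcs_of e))"
    using card_arcs_of by (simp add: card_UN_disjoint card_ge_0_finite arcs_of_def disjoint_iff)
  then show ?thesis
    by (simp add: card_arcs_of)
qed

lemma reversal_mat_eq_perm_mat:
  assumes "simple_graph V E" and "distinct as" and "set as = arcs E"
  obtains \<sigma> where "\<And>i. i < length as \<Longrightarrow> \<sigma> i < length as"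
    and "\<And>i. i < length as \<Longrightarrow> \<sigma> (\<sigma> i) = i" and "\<And>i. i < length as \<Longrightarrow> \<sigma> i \<noteq> i"
    and "reversal_mat as = perm_mat (length as) \<sigma>"
proof
  let ?I = "{..<length as}"
  define \<sigma> where "\<sigma> i = the_inv_into ?I ((!) as) (arc_rev (as ! i))" for i
  have inj: "inj_on ((!) as) ?I"
    using assms(2) by (simp add: inj_on_nth)
  have "arc_rev (as ! i) \<in> set as" if "i < length as" for i
    using assms(1,3) nth_mem[OF that] unfolding simple_graph_def arcs_def arc_rev_def by auto
  then have "arc_rev (as ! i) \<in> (!) as ` ?I" if "i < length as" for i
    using that unfolding in_set_conv_nth by (metis image_eqI lessThan_iff)
  then have \<sigma>: "\<sigma> i < length as" and as_\<sigma>: "as ! \<sigma> i = arc_rev (as ! i)" if "i < length as" for i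
    using the_inv_into_into[OF inj _ order_refl] f_the_inv_into_f[OF inj] that
    unfolding \<sigma>_def by (simp_all del: arc_rev_def)
  have nth_eq: "as ! i = as ! j \<longleftrightarrow> i = j" if "i < length as" "j < length as" for i j
    using nth_eq_iff_index_eq[OF assms(2) that] .
  show "\<sigma> i < length as" if "i < length as" for i
    using \<sigma>[OF that] .
  show "\<sigma> (\<sigma> i) = i" if "i < length as" for i
  proof -
    have "as ! \<sigma> (\<sigma> i) = as ! i"
      using as_\<sigma>[OF \<sigma>[OF that]] as_\<sigma>[OF that] by (simp add: arc_rev_def)
    then show ?thesis
      using nth_eq[OF \<sigma>[OF \<sigma>[OF that]] that] by simp
  qed
  show "\<sigma> i \<noteq> i" if "i < length as" for i
    using that as_\<sigma>[OF that] assms(1,3) nth_mem[OF that]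
    unfolding simple_graph_def arcs_def arc_rev_def by (auto simp: prod_eq_iff)
  have "as ! j = arc_rev (as ! i) \<longleftrightarrow> j = \<sigma> i" if "i < length as" "j < length as" for i j
    using nth_eq[OF that(2) \<sigma>[OF that(1)]] as_\<sigma>[OF that(1)] by simp
  then show "reversal_mat as = perm_mat (length as) \<sigma>"
    unfolding reversal_mat_def perm_mat_def by (intro eq_matI) auto
qed

theorem theorem5:
  fixes V :: "'a set" and E :: "'a \<Rightarrow> 'a \<Rightarrow> bool"
    and vs :: "'a list" and as :: "('a \<times> 'a) list"
    and n m :: nat and a b c u :: complex
    and d C S U :: "complex mat"
  assumes "simple_graph V E" and "connected_graph V E"
    and "distinct vs" and "set vs = V" and "n = length vs"
    and "distinct as" and "set as = arcs E" and "m = card (edges E)"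
    and "c = a - b"
    and "d \<in> carrier_mat n (2 * m)"
    and "d * mat_adjoint d = 1\<^sub>m n"
    and "S = reversal_mat as"
    and "C = a \<cdot>\<^sub>m (mat_adjoint d * d) + b \<cdot>\<^sub>m (1\<^sub>m (2 * m) - mat_adjoint d * d)"
    and "U = S * C"
    and "b\<^sup>2 * u\<^sup>2 \<noteq> 1"
  shows "det (1\<^sub>m (2 * m) - u \<cdot>\<^sub>m U) =
    (1 - b\<^sup>2 * u\<^sup>2) powi (int m - int n) *
    det ((1 - a * b * u\<^sup>2) \<cdot>\<^sub>m 1\<^sub>m n - (c * u) \<cdot>\<^sub>m (d * S * mat_adjoint d))"
proof -
  define k where "k = 1 - b\<^sup>2 * u\<^sup>2"
  have "length as = 2 * m"
    using card_arcs[OF assms(1)] assms(6-8) distinct_card by metis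
  then obtain \<sigma> where \<sigma>: "\<And>i. i < 2 * m \<Longrightarrow> \<sigma> i < 2 * m" "\<And>i. i < 2 * m \<Longrightarrow> \<sigma> (\<sigma> i) = i"
      "\<And>i. i < 2 * m \<Longrightarrow> \<sigma> i \<noteq> i" and S: "S = perm_mat (2 * m) \<sigma>"
    using reversal_mat_eq_perm_mat[OF assms(1,6,7)] assms(12) by metis
  have "det (1\<^sub>m (2 * m) - (- (u * b)) \<cdot>\<^sub>m S) = k ^ m"
    using det_one_minus_smult_perm_mat_involution[OF \<sigma>, of "- (u * b)"]
    unfolding S k_def by (simp add: power_mult_distrib mult.commute)
  moreover have adjoint: "mat_adjoint d \<in> carrier_mat (2 * m) n"
    using assms(10) by (auto simp: mat_adjoint_def)
  ultimately have "k ^ m * (k ^ n * det (1\<^sub>m (2 * m) - u \<cdot>\<^sub>m U)) = k ^ m * (k ^ m *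
      det ((1 - a * b * u\<^sup>2) \<cdot>\<^sub>m 1\<^sub>m n - (c * u) \<cdot>\<^sub>m (d * S * mat_adjoint d)))"
    (is "k ^ m * (k ^ n * ?lhs) = k ^ m * (k ^ m * ?rhs)")
    using det_one_minus_walk[OF _ perm_mat_involution_squared[OF \<sigma>(1,2)] assms(10) adjoint
        assms(11), folded S, where a = a and b = b and u = u] assms(9,13-15)
    by (simp add: S k_def mult_2 power_add mult.assoc)
  moreover have "k \<noteq> 0"
    using assms(15) by (simp add: k_def)
  ultimately have "k ^ n * ?lhs = k ^ m * ?rhs"
    by simp
  with \<open>k \<noteq> 0\<close> show ?thesis
    unfolding k_def[symmetric] by (simp add: power_int_diff field_simps)
qed

end
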